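(* Fix $n\ge 1$ and $p\ge 1$. Let $\{A^t\}_{t\ge 0}$ be a sequence of couplings of positive integral diamonds of Dynkin type $\mathbb{A}_n$ which is a $p$-cycle ($A^{t+p}=A^t$ for all $t$), considered through its terms $A^0,\dots,A^{2p-1}$. For $0\le i\le p-1$ consider the subsequence $\{B^{s}_{(i)}\}_{0\le s\le p-1}$ with $B^{s}_{(i)}=A^{i+s}$, and its infinite array $C^{(i)}=(c^{(i)}_{r,j})_{r\in\mathbb{Z},0\le j\le n+1}$ given by $c^{(i)}_{(s+1)+kp,\,j}=a^{i+s}_{1,j}$ ($0\le s\le p-1$, $k\in\mathbb{Z}$, $1\le j\le n$) and $c^{(i)}_{r,0}=c^{(i)}_{r,n+1}=1$. Then, for all $0\le i\le p-1$, these subsequences generate the same frieze pattern of order $n+3$.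
   Context: An $\mathbb{A}_n$-diamond over an integral domain $\mathbf{R}$ is a family $A=(a_{i,j})$ of elements of $\mathbf{R}$, with $a_{1,j}$ for $1\le j\le n+1$ and $a_{2,j}$ for $0\le j\le n$, such that (D1) $a_{2,0}=a_{1,n+1}=1$ and (D2) $a_{1,j}a_{2,j}-a_{2,j-1}a_{1,j+1}=1$ for $1\le j\le n$. For $\mathbf{R}=\mathbb{Z}$, $A$ is a positive integral diamond of Dynkin type $\mathbb{A}_n$ if it also satisfies (D3): there are integers $a,m_a$ with $1\le a\le\lfloor (n+2)/2\rfloor$ such that either $(a_{1,1},a_{2,1})=(a,a+m_a)$ or $(a_{1,1},a_{2,1})=(a+m_a,a)$, and $a_{1,2}=a^2+am_a-1$, where $1\le m_1\le n$ when $a=1$ and $0\le m_a\le n+2(1-a)$ when $a>1$. $A\models B$ (coupling) means $a_{2,j}=b_{1,j}$ for $1\le j\le n$; a sequence of couplings is $\{A^t\}_{t\ge0}$ with $A^t\models A^{t+1}$ for all $t$, and we write $A^t=(a^t_{i,j})$. An array $(c_{r,j})_{r\in\mathbb{Z},0\le j\le n+1}$ with $c_{r,0}=c_{r,n+1}=1$ is a frieze pattern of order $n+3$ if $c_{r,j}c_{r+1,j}-c_{r+1,j-1}c_{r,j+1}=1$ for all $r\in\mathbb{Z}$, $1\le j\le n$ (i.e. placing $c_{r,j}$ in row $j$, column $2r+j$, bordered by rows of zeros, yields a closed Coxeter frieze pattern). Two such arrays are regarded as the same frieze pattern if one is obtained from the other by a translation of the index $r$. *)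

theory Defs
  imports Main
begin

text \<open>A diamond is represented as a function a :: nat => nat => int, where a 1 j and a 2 j
are the entries a_{1,j} (1 <= j <= n+1) and a_{2,j} (0 <= j <= n); other values are irrelevant.\<close>

type_synonym diamond = "nat \<Rightarrow> nat \<Rightarrow> int"

definition is_diamond :: "nat \<Rightarrow> diamond \<Rightarrow> bool" where
  "is_diamond n a \<longleftrightarrow>
     a 2 0 = 1 \<and> a 1 (n+1) = 1 \<and>
     (\<forall>j. 1 \<le> j \<and> j \<le> n \<longrightarrow> a 1 j * a 2 j - a 2 (j-1) * a 1 (j+1) = 1)"

definition pos_int_diamond :: "nat \<Rightarrow> diamond \<Rightarrow> bool" where
  "pos_int_diamond n a \<longleftrightarrow> is_diamond n a \<and>
     (\<exists>(x::int) (m::int). 1 \<le> x \<and> x \<le> (int n + 2) div 2 \<and>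
        ((a 1 1 = x \<and> a 2 1 = x + m) \<or> (a 1 1 = x + m \<and> a 2 1 = x)) \<and>
        a 1 2 = x^2 + x*m - 1 \<and>
        (if x = 1 then 1 \<le> m \<and> m \<le> int n else 0 \<le> m \<and> m \<le> int n + 2*(1 - x)))"

definition coupling :: "nat \<Rightarrow> diamond \<Rightarrow> diamond \<Rightarrow> bool" where
  "coupling n a b \<longleftrightarrow> (\<forall>j. 1 \<le> j \<and> j \<le> n \<longrightarrow> a 2 j = b 1 j)"

definition diamond_eq :: "nat \<Rightarrow> diamond \<Rightarrow> diamond \<Rightarrow> bool" where
  "diamond_eq n a b \<longleftrightarrow> (\<forall>j. 1 \<le> j \<and> j \<le> n+1 \<longrightarrow> a 1 j = b 1 j) \<and>
                         (\<forall>j. j \<le> n \<longrightarrow> a 2 j = b 2 j)"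

definition frieze_pattern :: "nat \<Rightarrow> (int \<Rightarrow> nat \<Rightarrow> int) \<Rightarrow> bool" where
  "frieze_pattern n c \<longleftrightarrow> (\<forall>r. c r 0 = 1 \<and> c r (n+1) = 1) \<and>
     (\<forall>r j. 1 \<le> j \<and> j \<le> n \<longrightarrow> c r j * c (r+1) j - c (r+1) (j-1) * c r (j+1) = 1)"

definition same_frieze :: "nat \<Rightarrow> (int \<Rightarrow> nat \<Rightarrow> int) \<Rightarrow> (int \<Rightarrow> nat \<Rightarrow> int) \<Rightarrow> bool" where
  "same_frieze n c d \<longleftrightarrow> (\<exists>k::int. \<forall>r j. j \<le> n+1 \<longrightarrow> c r j = d (r + k) j)"

text \<open>The array C^(i): c_{(s+1)+kp, j} = a^{i+s}_{1,j}, borders 1.\<close>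
definition sub_array :: "nat \<Rightarrow> nat \<Rightarrow> (nat \<Rightarrow> diamond) \<Rightarrow> nat \<Rightarrow> int \<Rightarrow> nat \<Rightarrow> int" where
  "sub_array n p A i r j =
     (if j = 0 \<or> j = n+1 then 1 else A (i + nat ((r - 1) mod int p)) 1 j)"

end

theory Submission
  imports Defs
begin

text \<open>By periodicity, row \<open>r\<close> of \<open>sub_array n p A i\<close> is the first row of any \<open>A t\<close>
  with \<open>t \<equiv> i + r - 1 (mod p)\<close>. By coupling, row \<open>r + 1\<close> is then the second row of the same
  \<open>A t\<close>, so, with the border entries supplied by (D1), the frieze relation between rows \<open>r\<close>
  and \<open>r + 1\<close> is literally the diamond relation (D2) of \<open>A t\<close>. The same residue description
  shows that the array for \<open>i\<close> is the one for \<open>0\<close> translated by \<open>i\<close>.\<close>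

lemma periodic_mod_eq:
  fixes f :: "nat \<Rightarrow> 'a"
  assumes periodic: "\<And>t. f (t + p) = f t" and "t mod p = t' mod p"
  shows "f t = f t'"
proof -
  have shift: "f (s + k * p) = f s" for s k
  proof (induction k)
    case (Suc k)
    have "f (s + Suc k * p) = f (s + k * p + p)"
      by (simp add: algebra_simps)
    then show ?case
      using periodic Suc.IH by simp
  qed simp
  have "f t = f (t mod p)"
    using shift [of "t mod p" "t div p"] by simp
  also have "\<dots> = f t'"
    using shift [of "t' mod p" "t' div p"] \<open>t mod p = t' mod p\<close> by simp
  finally show ?thesis .
qed

locale diamond_cycle =
  fixes n p :: nat and A :: "nat \<Rightarrow> diamond"
  assumes period_pos: "0 < p"
    and diamond: "\<And>t. is_diamond n (A t)"
    and coupled: "\<And>t. coupling n (A t) (A (t + 1))"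
    and periodic: "\<And>t. diamond_eq n (A (t + p)) (A t)"
begin

lemma row1_mod_eq:
  assumes "1 \<le> j" "j \<le> n + 1" and "t mod p = t' mod p"
  shows "A t 1 j = A t' 1 j"
  using periodic_mod_eq [where f = "\<lambda>t. A t 1 j"] periodic assms
  unfolding diamond_eq_def by blast

lemma sub_array_row1:
  assumes residue: "int t mod int p = (int i + r - 1) mod int p"
    and j: "1 \<le> j" "j \<le> n + 1"
  shows "sub_array n p A i r j = A t 1 j"
proof (cases "j = n + 1")
  case True
  then show ?thesis
    using diamond unfolding sub_array_def is_diamond_def by simp
next
  case False
  have "int ((i + nat ((r - 1) mod int p)) mod p) = (int i + (r - 1) mod int p) mod int p"
    using period_pos by (simp add: zmod_int)
  also have "\<dots> = int (t mod p)"
    using residue by (simp add: zmod_int mod_add_right_eq add_diff_eq)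
  finally have "(i + nat ((r - 1) mod int p)) mod p = t mod p"
    by (simp only: of_nat_eq_iff)
  with j have "A (i + nat ((r - 1) mod int p)) 1 j = A t 1 j"
    by (rule row1_mod_eq)
  then show ?thesis
    using False j unfolding sub_array_def by simp
qed

lemma sub_array_row2:
  assumes residue: "int t mod int p = (int i + r - 1) mod int p" and j: "j \<le> n"
  shows "sub_array n p A i (r + 1) j = A t 2 j"
proof (cases "j = 0")
  case True
  then show ?thesis
    using diamond unfolding sub_array_def is_diamond_def by simp
next
  case False
  have "int (t + 1) mod int p = (int t mod int p + 1) mod int p"
    by (simp only: of_nat_add of_nat_1 mod_add_left_eq)
  also have "\<dots> = (int i + (r + 1) - 1) mod int p"
    using residue by (simp add: mod_add_left_eq)
  finally have "int (t + 1) mod int p = (int i + (r + 1) - 1) mod int p" .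
  then have "sub_array n p A i (r + 1) j = A (t + 1) 1 j"
    using False j by (intro sub_array_row1) auto
  also have "\<dots> = A t 2 j"
    using coupled False j unfolding coupling_def by simp
  finally show ?thesis .
qed

lemma frieze_pattern_sub_array: "frieze_pattern n (sub_array n p A i)"
  unfolding frieze_pattern_def
proof (intro conjI allI impI)
  fix r :: int and j :: nat
  assume "1 \<le> j \<and> j \<le> n"
  then have j: "1 \<le> j" "j \<le> n" by simp_all
  define t where "t = nat ((int i + r - 1) mod int p)"
  have residue: "int t mod int p = (int i + r - 1) mod int p"
    using period_pos by (simp add: t_def)
  have "A t 1 j * A t 2 j - A t 2 (j - 1) * A t 1 (j + 1) = 1"
    using diamond j unfolding is_diamond_def by blast
  moreover have "sub_array n p A i r j = A t 1 j" "sub_array n p A i r (j + 1) = A t 1 (j + 1)"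
    using j by (simp_all add: sub_array_row1 [OF residue])
  moreover have "sub_array n p A i (r + 1) j = A t 2 j"
    "sub_array n p A i (r + 1) (j - 1) = A t 2 (j - 1)"
    using j by (simp_all add: sub_array_row2 [OF residue])
  ultimately show "sub_array n p A i r j * sub_array n p A i (r + 1) j -
      sub_array n p A i (r + 1) (j - 1) * sub_array n p A i r (j + 1) = 1"
    by simp
qed (simp_all add: sub_array_def)

lemma same_frieze_sub_array: "same_frieze n (sub_array n p A i) (sub_array n p A 0)"
  unfolding same_frieze_def
proof (intro exI allI impI)
  fix r :: int and j :: nat
  assume "j \<le> n + 1"
  define t where "t = nat ((int i + r - 1) mod int p)"
  have "int t mod int p = (int i + r - 1) mod int p"
    using period_pos by (simp add: t_def)
  then have "sub_array n p A i r j = A t 1 j" "sub_array n p A 0 (r + int i) j = A t 1 j"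
    if "1 \<le> j"
    using that \<open>j \<le> n + 1\<close> by (simp_all add: sub_array_row1 add.commute)
  then show "sub_array n p A i r j = sub_array n p A 0 (r + int i) j"
    by (cases "j = 0") (simp_all add: sub_array_def)
qed

end

theorem proposition6:
  fixes n p :: nat and A :: "nat \<Rightarrow> diamond"
  assumes "n \<ge> 1" and "p \<ge> 1"
    and "\<forall>t. pos_int_diamond n (A t)"
    and "\<forall>t. coupling n (A t) (A (t+1))"
    and "\<forall>t. diamond_eq n (A (t+p)) (A t)"
  shows "\<forall>i < p. frieze_pattern n (sub_array n p A i) \<and>
                 same_frieze n (sub_array n p A i) (sub_array n p A 0)"
proof -
  interpret diamond_cycle n p A
    using assms(2-5) by unfold_locales (auto simp: pos_int_diamond_def)
  show ?thesis
    by (simp add: frieze_pattern_sub_array same_frieze_sub_array)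
qed

end
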